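(* Let $n\ge 5$ be even and let $x,y$ be adjacent vertices of $Q_n$ with $f_n(x)+f_n(y)=\operatorname{str}_{f_n}(Q_n)$. If $x$ and $y$ both begin with $11$, then $$\operatorname{str}_{f_n}(Q_n)\le \operatorname{str}_{f_{n-2}}(Q_{n-2})+3\cdot 2^{n-2}+\binom{n-3}{\lceil (n-3)/2\rceil}+\binom{n-2}{\lceil (n-2)/2\rceil}.$$
   Context: $Q_n$ is the $n$-dimensional hypercube: vertices are the $n$-bit strings, adjacent iff they differ in exactly one position. For a bijection $f:V(G)\to\{1,\dots,|V(G)|\}$, $\operatorname{str}_f(G)=\max\{f(u)+f(v):uv\in E(G)\}$. An $n$-bit string is $x_1\cdots x_n$, $x_i\in\{0,1\}$; its weight is its number of $1$s. Lexicographic order: $x<y$ if for some $k$, $x_j=y_j$ for $j<k$ and $x_k<y_k$. $S_n^i$ is the sequence of $n$-bit strings of weight $i$ in increasing lexicographic order; $R_n^i$ is the same set in decreasing lexicographic order. $S_n$ is the concatenation $(R_n^1,R_n^3,\dots,R_n^{n-1},S_n^n,S_n^{n-2},\dots,S_n^2,S_n^0)$ for even $n$ and $(R_n^1,R_n^3,\dots,R_n^{n-2},R_n^n,S_n^{n-1},\dots,S_n^2,S_n^0)$ for odd $n$; $f_n$ maps the string in position $j$ of $S_n$ to $j$. *)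

theory Defs
  imports Complex_Main "HOL-Library.List_Lexorder"
begin

text \<open>n-bit strings are lists of booleans (False = 0, True = 1) of length n.
  The order on lists from List_Lexorder is the lexicographic order, with False < True.\<close>

definition weight :: "bool list \<Rightarrow> nat" where
  "weight x = length (filter id x)"

definition hcube_V :: "nat \<Rightarrow> bool list set" where
  "hcube_V n = {x. length x = n}"

definition hcube_adj :: "nat \<Rightarrow> bool list \<Rightarrow> bool list \<Rightarrow> bool" where
  "hcube_adj n x y \<longleftrightarrow> length x = n \<and> length y = n \<and> card {i. i < n \<and> x ! i \<noteq> y ! i} = 1"

definition S_lev :: "nat \<Rightarrow> nat \<Rightarrow> bool list list" where
  "S_lev n i = sorted_list_of_set {x. length x = n \<and> weight x = i}"

definition R_lev :: "nat \<Rightarrow> nat \<Rightarrow> bool list list" where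
  "R_lev n i = rev (S_lev n i)"

text \<open>The sequence S_n.  Even n: R^1,R^3,...,R^{n-1},S^n,S^{n-2},...,S^0.
  Odd n: R^1,R^3,...,R^n,S^{n-1},...,S^0.\<close>
definition seq_S :: "nat \<Rightarrow> bool list list" where
  "seq_S n = (if even n
     then concat (map (\<lambda>k. R_lev n (2*k+1)) [0..<n div 2])
          @ concat (map (\<lambda>k. S_lev n (n - 2*k)) [0..<n div 2 + 1])
     else concat (map (\<lambda>k. R_lev n (2*k+1)) [0..<(n+1) div 2])
          @ concat (map (\<lambda>k. S_lev n (n - 1 - 2*k)) [0..<(n+1) div 2]))"

definition f_lab :: "nat \<Rightarrow> bool list \<Rightarrow> nat" where
  "f_lab n x = (THE j. 1 \<le> j \<and> j \<le> length (seq_S n) \<and> seq_S n ! (j - 1) = x)"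

definition strength :: "bool list set \<Rightarrow> (bool list \<Rightarrow> bool list \<Rightarrow> bool) \<Rightarrow> (bool list \<Rightarrow> nat) \<Rightarrow> nat" where
  "strength V E f = Max {f u + f v | u v. u \<in> V \<and> v \<in> V \<and> E u v}"

abbreviation str_Q :: "nat \<Rightarrow> nat" where
  "str_Q n \<equiv> strength (hcube_V n) (hcube_adj n) (f_lab n)"

end

theory Submission
  imports Defs
begin

text \<open>Write \<open>x = 11x'\<close>, \<open>y = 11y'\<close> and \<open>m = n - 2\<close>. Strings beginning with \<open>11\<close> occur in
  \<open>S_n\<close> in the same relative order as their tails in \<open>S_m\<close>, and every other string is
  lexicographically below \<open>11z\<close>, so whether it precedes \<open>11z\<close> depends only on its weight and on
  the weight of \<open>z\<close>. Hence \<open>f_n(11z) = f_m(z) + c(weight z)\<close> for an explicit binomial sum \<open>c\<close>.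
  The tails are adjacent, so \<open>f_m(x') + f_m(y') \<le> str(Q_m)\<close>; their weights are \<open>w\<close> and \<open>w + 1\<close>,
  and \<open>c(w) + c(w + 1) = 3 \<cdot> 2^m \<plusminus> (C(m - 1, w) + C(m, w + 1))\<close>, which the central binomial
  coefficients bound.\<close>

lemma alternating_sum_choose_Suc:
  "(\<Sum>j\<le>w. (- 1) ^ j * of_nat (Suc m choose j)) = ((- 1) ^ w * of_nat (m choose w) :: 'a :: comm_ring_1)"
  by (induction w) (simp_all add: algebra_simps)

lemma binomial_le_ceiling_half: "n choose k \<le> n choose ((n + 1) div 2)"
proof -
  have "n - n div 2 = (n + 1) div 2"
    by presburger
  then show ?thesis
    using binomial_maximum[of n k] binomial_symmetric[of "n div 2" n] by simp
qed

lemma nat_ceiling_half: "nat \<lceil>real n / 2\<rceil> = (n + 1) div 2"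
proof -
  have "- (- int n div 2) = int ((n + 1) div 2)"
    by presburger
  then show ?thesis
    using ceiling_divide_eq_div[of "int n" 2, where ?'a = real] by simp
qed

lemma distinct_if_sorted_wrt_irrefl: "sorted_wrt R xs \<Longrightarrow> (\<And>x. \<not> R x x) \<Longrightarrow> distinct xs"
  by (induction xs) auto

lemma sorted_wrt_concat_upt:
  assumes "\<And>i. i < k \<Longrightarrow> sorted_wrt R (g i)"
    and "\<And>i j a b. i < j \<Longrightarrow> j < k \<Longrightarrow> a \<in> set (g i) \<Longrightarrow> b \<in> set (g j) \<Longrightarrow> R a b"
  shows "sorted_wrt R (concat (map g [0..<k]))"
  using assms by (induction k) (auto simp: sorted_wrt_append)

lemma card_less_nth_if_sorted_wrt:
  assumes sorted: "sorted_wrt R xs" and asym: "\<And>x y. R x y \<Longrightarrow> \<not> R y x" and k: "k < length xs"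
  shows "card {u \<in> set xs. R u (xs ! k)} = k"
proof -
  have "distinct xs"
    using sorted asym by (blast intro: distinct_if_sorted_wrt_irrefl)
  have "{u \<in> set xs. R u (xs ! k)} = (!) xs ` {..<k}"
  proof (intro set_eqI iffI)
    fix u assume "u \<in> {u \<in> set xs. R u (xs ! k)}"
    then obtain i where i: "i < length xs" "u = xs ! i" "R u (xs ! k)"
      by (auto simp: in_set_conv_nth)
    have "i < k"
    proof (rule ccontr)
      assume "\<not> i < k"
      moreover have "i \<noteq> k"
        using i asym by blast
      ultimately have "R (xs ! k) (xs ! i)"
        using sorted i(1) by (simp add: sorted_wrt_iff_nth_less)
      then show False
        using i asym by blast
    qed
    then show "u \<in> (!) xs ` {..<k}"
      using i by auto
  next
    fix u assume "u \<in> (!) xs ` {..<k}"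
    then show "u \<in> {u \<in> set xs. R u (xs ! k)}"
      using sorted k by (auto simp: sorted_wrt_iff_nth_less)
  qed
  moreover have "inj_on ((!) xs) {..<k}"
    using \<open>distinct xs\<close> k by (auto simp: inj_on_def nth_eq_iff_index_eq)
  ultimately show ?thesis
    by (simp add: card_image)
qed

lemma strength_ge:
  assumes "finite V" "u \<in> V" "v \<in> V" "E u v"
  shows "f u + f v \<le> strength V E f"
proof -
  have "{f u + f v |u v. u \<in> V \<and> v \<in> V \<and> E u v} \<subseteq> (\<lambda>(u, v). f u + f v) ` (V \<times> V)"
    by auto
  then have "finite {f u + f v |u v. u \<in> V \<and> v \<in> V \<and> E u v}"
    using assms(1) by (meson finite_SigmaI finite_imageI finite_subset)
  then show ?thesis
    unfolding strength_def using assms by (intro Max_ge) blast+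
qed

lemma weight_Cons [simp]: "weight (a # u) = (if a then Suc (weight u) else weight u)"
  by (simp add: weight_def)

lemma weight_le_length: "weight u \<le> length u"
  by (simp add: weight_def)

lemma weight_eq_card: "weight u = card {i. i < length u \<and> u ! i}"
  by (simp add: weight_def length_filter_conv_card)

lemma finite_bool_lists_length: "finite {u :: bool list. length u = m \<and> P u}"
  by (rule finite_subset[OF _ finite_lists_length_eq[of "UNIV :: bool set" m]]) auto

lemma card_bool_lists_weight: "card {u :: bool list. length u = m \<and> weight u = j} = m choose j"
proof -
  let ?L = "{u :: bool list. length u = m \<and> weight u = j}"
  have "bij_betw (\<lambda>u. {i. i < m \<and> u ! i}) ?L {A. A \<subseteq> {..<m} \<and> card A = j}"
  proof (rule bij_betw_byWitness[where f' = "\<lambda>A. map (\<lambda>i. i \<in> A) [0..<m]"])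
    show "\<forall>u \<in> ?L. map (\<lambda>i. i \<in> {i. i < m \<and> u ! i}) [0..<m] = u"
      by (auto intro: nth_equalityI)
    show inv: "\<forall>A \<in> {A. A \<subseteq> {..<m} \<and> card A = j}. {i. i < m \<and> map (\<lambda>i. i \<in> A) [0..<m] ! i} = A"
      by auto
    show "(\<lambda>u. {i. i < m \<and> u ! i}) ` ?L \<subseteq> {A. A \<subseteq> {..<m} \<and> card A = j}"
      by (auto simp: weight_eq_card)
    show "(\<lambda>A. map (\<lambda>i. i \<in> A) [0..<m]) ` {A. A \<subseteq> {..<m} \<and> card A = j} \<subseteq> ?L"
      using inv by (auto simp: weight_eq_card)
  qed
  then have "card ?L = card {A. A \<subseteq> {..<m} \<and> card A = j}"
    by (rule bij_betw_same_card)
  then show ?thesis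
    by (simp add: n_subsets)
qed

lemma card_bool_lists_weight_pred:
  "card {u :: bool list. length u = m \<and> P (weight u)} = (\<Sum>j\<le>m. of_bool (P j) * (m choose j))"
proof -
  let ?L = "{u :: bool list. length u = m \<and> P (weight u)}"
  have "card ?L = (\<Sum>j\<le>m. card {u \<in> ?L. weight u = j})"
    unfolding card_eq_sum
    by (rule sum.group[symmetric]) (auto simp: finite_bool_lists_length weight_le_length)
  also have "\<dots> = (\<Sum>j\<le>m. of_bool (P j) * (m choose j))"
  proof (rule sum.cong)
    fix j
    show "card {u \<in> ?L. weight u = j} = of_bool (P j) * (m choose j)"
    proof (cases "P j")
      case True
      then have "{u \<in> ?L. weight u = j} = {u. length u = m \<and> weight u = j}" by auto
      then show ?thesis using True by (simp add: card_bool_lists_weight)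
    next
      case False
      then have "{u \<in> ?L. weight u = j} = {}" by auto
      then show ?thesis using False by (simp only: card.empty of_bool_eq mult_zero_left)
    qed
  qed simp
  finally show ?thesis .
qed

lemma card_bool_lists_not_prefix_11:
  "card {u. length u = Suc (Suc m) \<and> take 2 u \<noteq> [True, True] \<and> P (weight u)}
     = card {v. length v = m \<and> P (weight v)} + 2 * card {v. length v = m \<and> P (Suc (weight v))}"
proof -
  let ?A = "{v. length v = m \<and> P (weight v)}" and ?B = "{v. length v = m \<and> P (Suc (weight v))}"
  have "{u. length u = Suc (Suc m) \<and> take 2 u \<noteq> [True, True] \<and> P (weight u)}
      = (\<lambda>v. False # False # v) ` ?A \<union> (\<lambda>v. False # True # v) ` ?B \<union> (\<lambda>v. True # False # v) ` ?B"
    (is "?L = ?R")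
  proof
    show "?L \<subseteq> ?R"
    proof
      fix u assume "u \<in> ?L"
      then obtain a b v where "u = a # b # v" "length v = m" "P (weight u)" "\<not> (a \<and> b)"
        by (auto simp: length_Suc_conv numeral_2_eq_2)
      then show "u \<in> ?R" by (cases a; cases b) auto
    qed
  qed (auto simp: numeral_2_eq_2)
  moreover have "card ?R = card ?A + card ?B + card ?B"
    by (subst card_Un_disjoint, simp_all add: finite_bool_lists_length, blast)+
      (simp add: card_image inj_on_def)
  ultimately show ?thesis
    by simp
qed

lemma finite_hcube_V: "finite (hcube_V n)"
  using finite_bool_lists_length[of n "\<lambda>_. True"] by (simp add: hcube_V_def)

lemma hcube_adj_Cons_Cons: "hcube_adj (Suc n) (a # u) (a # v) \<longleftrightarrow> hcube_adj n u v"
proof -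
  have "{i. i < Suc n \<and> (a # u) ! i \<noteq> (a # v) ! i} = Suc ` {i. i < n \<and> u ! i \<noteq> v ! i}"
    by (auto simp: gr0_conv_Suc nth_Cons split: nat.splits)
  then show ?thesis
    by (simp add: hcube_adj_def card_image)
qed

lemma hcube_adj_weight:
  assumes "hcube_adj n u v"
  shows "weight u = Suc (weight v) \<or> weight v = Suc (weight u)"
proof -
  obtain i0 where i0: "{i. i < n \<and> u ! i \<noteq> v ! i} = {i0}"
    using assms card_1_singletonE unfolding hcube_adj_def by blast
  then have i0_diff: "i0 < n" "u ! i0 \<noteq> v ! i0" and same: "\<And>i. i < n \<Longrightarrow> i \<noteq> i0 \<Longrightarrow> u ! i = v ! i"
    by blast+
  have len: "length u = n" "length v = n"
    using assms by (auto simp: hcube_adj_def)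
  let ?U = "{i. i < n \<and> u ! i}" and ?V = "{i. i < n \<and> v ! i}"
  have "card ?U = Suc (card ?V) \<or> card ?V = Suc (card ?U)"
  proof (cases "u ! i0")
    case True
    then have "?U = insert i0 ?V" "i0 \<notin> ?V"
      using i0_diff same by auto
    then show ?thesis by simp
  next
    case False
    then have "?V = insert i0 ?U" "i0 \<notin> ?U"
      using i0_diff same by auto
    then show ?thesis by simp
  qed
  then show ?thesis
    using len by (simp add: weight_eq_card)
qed

definition seq_S_less :: "bool list \<Rightarrow> bool list \<Rightarrow> bool" where
  "seq_S_less u z \<longleftrightarrow> (odd (weight u) \<and> even (weight z))
     \<or> (odd (weight u) \<and> odd (weight z) \<and> (weight u < weight z \<or> weight u = weight z \<and> z < u))
     \<or> (even (weight u) \<and> even (weight z) \<and> (weight z < weight u \<or> weight u = weight z \<and> u < z))"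

lemma seq_S_less_asym: "seq_S_less u z \<Longrightarrow> \<not> seq_S_less z u"
  unfolding seq_S_less_def using less_not_sym[of u z] by linarith

lemma set_S_lev [simp]: "set (S_lev n i) = {x. length x = n \<and> weight x = i}"
  by (simp add: S_lev_def finite_bool_lists_length)

lemma set_R_lev [simp]: "set (R_lev n i) = {x. length x = n \<and> weight x = i}"
  by (simp add: R_lev_def)

lemma sorted_S_lev: "sorted_wrt (<) (S_lev n i)"
  by (simp add: S_lev_def)

lemma seq_S_even:
  "even n \<Longrightarrow> seq_S n = concat (map (\<lambda>k. R_lev n (2 * k + 1)) [0..<n div 2])
     @ concat (map (\<lambda>k. S_lev n (n - 2 * k)) [0..<n div 2 + 1])"
  by (simp add: seq_S_def)

lemma sorted_seq_S:
  assumes "even n"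
  shows "sorted_wrt seq_S_less (seq_S n)"
proof -
  have odd_part: "sorted_wrt seq_S_less (concat (map (\<lambda>k. R_lev n (2 * k + 1)) [0..<n div 2]))"
  proof (rule sorted_wrt_concat_upt)
    fix i
    show "sorted_wrt seq_S_less (R_lev n (2 * i + 1))"
      using sorted_S_lev unfolding R_lev_def sorted_wrt_rev
      by (rule sorted_wrt_mono_rel[rotated]) (auto simp: seq_S_less_def)
  qed (auto simp: seq_S_less_def)
  have even_part: "sorted_wrt seq_S_less (concat (map (\<lambda>k. S_lev n (n - 2 * k)) [0..<n div 2 + 1]))"
  proof (rule sorted_wrt_concat_upt)
    fix i
    show "sorted_wrt seq_S_less (S_lev n (n - 2 * i))"
      using sorted_S_lev
      by (rule sorted_wrt_mono_rel[rotated]) (use assms in \<open>auto simp: seq_S_less_def\<close>)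
  qed (use assms in \<open>auto simp: seq_S_less_def\<close>)
  show ?thesis
    using odd_part even_part assms by (auto simp: seq_S_even sorted_wrt_append seq_S_less_def)
qed

lemma set_seq_S:
  assumes "even n"
  shows "set (seq_S n) = hcube_V n"
proof -
  have "set (seq_S n) = {u. length u = n \<and>
      ((\<exists>k < n div 2. weight u = 2 * k + 1) \<or> (\<exists>k < n div 2 + 1. weight u = n - 2 * k))}"
    using assms by (auto simp: seq_S_even simp del: upt_Suc)
  also have "\<dots> = hcube_V n"
  proof -
    have "(\<exists>k < n div 2. w = 2 * k + 1) \<or> (\<exists>k < n div 2 + 1. w = n - 2 * k)" if "w \<le> n" for w
      using assms that by presburger
    then show ?thesis
      using weight_le_length by (auto simp: hcube_V_def)
  qed
  finally show ?thesis .
qed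

lemma f_lab_eq_card:
  assumes "even n" "length z = n"
  shows "f_lab n z = Suc (card {u. length u = n \<and> seq_S_less u z})"
proof -
  let ?xs = "seq_S n"
  have "distinct ?xs"
    using sorted_seq_S[OF assms(1)] seq_S_less_asym by (blast intro: distinct_if_sorted_wrt_irrefl)
  have "z \<in> set ?xs"
    using set_seq_S[OF assms(1)] assms(2) by (simp add: hcube_V_def)
  then obtain k where k: "k < length ?xs" "?xs ! k = z"
    by (auto simp: in_set_conv_nth)
  have "f_lab n z = Suc k"
    unfolding f_lab_def
  proof (rule the_equality)
    fix j assume j: "1 \<le> j \<and> j \<le> length ?xs \<and> ?xs ! (j - 1) = z"
    then have "j - 1 = k"
      using nth_eq_iff_index_eq[OF \<open>distinct ?xs\<close>, of "j - 1" k] k by force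
    then show "j = Suc k"
      using j by linarith
  qed (use k in auto)
  moreover have "card {u \<in> set ?xs. seq_S_less u z} = k"
    using card_less_nth_if_sorted_wrt[OF sorted_seq_S[OF assms(1)] seq_S_less_asym k(1)] k(2) by simp
  ultimately show ?thesis
    using set_seq_S[OF assms(1)] by (simp add: hcube_V_def)
qed

text \<open>A string of weight \<open>j\<close> that does not begin with \<open>11\<close> is lexicographically below \<open>11z\<close>,
  so it precedes \<open>11z\<close> in \<open>seq_S\<close> iff \<open>precedes_11 (weight z) j\<close>.\<close>
definition precedes_11 :: "nat \<Rightarrow> nat \<Rightarrow> bool" where
  "precedes_11 w j \<longleftrightarrow> (if odd w then odd j \<and> j < w + 2 else odd j \<or> w + 2 \<le> j)"

definition offset_11 :: "nat \<Rightarrow> nat \<Rightarrow> nat" where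
  "offset_11 m w = card {u. length u = Suc (Suc m) \<and> take 2 u \<noteq> [True, True] \<and> precedes_11 w (weight u)}"

lemma seq_S_less_11_11: "seq_S_less (True # True # u) (True # True # z) \<longleftrightarrow> seq_S_less u z"
  by (auto simp: seq_S_less_def)

lemma seq_S_less_11_iff:
  assumes "u = a # b # v" "\<not> (a \<and> b)"
  shows "seq_S_less u (True # True # z) \<longleftrightarrow> precedes_11 (weight z) (weight u)"
proof -
  have "u < True # True # z"
    using assms by (cases a; cases b) auto
  then have "\<not> True # True # z < u" "u \<noteq> True # True # z"
    by auto
  then show ?thesis
    by (auto simp: seq_S_less_def precedes_11_def)
qed

lemma f_lab_11:
  assumes "even m" "length z = m"
  shows "f_lab (Suc (Suc m)) (True # True # z) = f_lab m z + offset_11 m (weight z)"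
proof -
  let ?z = "True # True # z"
  let ?B = "{u. length u = Suc (Suc m) \<and> take 2 u \<noteq> [True, True] \<and> precedes_11 (weight z) (weight u)}"
  have split: "{u. length u = Suc (Suc m) \<and> seq_S_less u ?z}
      = (\<lambda>v. True # True # v) ` {v. length v = m \<and> seq_S_less v z} \<union> ?B"
  proof (intro set_eqI iffI)
    fix u assume "u \<in> {u. length u = Suc (Suc m) \<and> seq_S_less u ?z}"
    moreover obtain a b v where "u = a # b # v"
      using calculation by (auto simp: length_Suc_conv)
    ultimately show "u \<in> (\<lambda>v. True # True # v) ` {v. length v = m \<and> seq_S_less v z} \<union> ?B"
      using seq_S_less_11_iff[of u a b v z] by (cases "a \<and> b") (auto simp: seq_S_less_11_11)
  next
    fix u assume "u \<in> (\<lambda>v. True # True # v) ` {v. length v = m \<and> seq_S_less v z} \<union> ?B"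
    moreover obtain a b v where "u = a # b # v" "length v = m"
      using calculation by (auto simp: length_Suc_conv)
    ultimately show "u \<in> {u. length u = Suc (Suc m) \<and> seq_S_less u ?z}"
      using seq_S_less_11_iff[of u a b v z] by (auto simp: seq_S_less_11_11)
  qed
  have "card {u. length u = Suc (Suc m) \<and> seq_S_less u ?z}
      = card ((\<lambda>v. True # True # v) ` {v. length v = m \<and> seq_S_less v z}) + card ?B"
    unfolding split
    by (rule card_Un_disjoint) (auto intro: finite_imageI finite_bool_lists_length simp: numeral_2_eq_2)
  then have "card {u. length u = Suc (Suc m) \<and> seq_S_less u ?z}
      = card {v. length v = m \<and> seq_S_less v z} + offset_11 m (weight z)"
    by (simp add: offset_11_def card_image inj_on_def)
  then show ?thesis
    using f_lab_eq_card[of "Suc (Suc m)" ?z] f_lab_eq_card[OF assms] assms by simp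
qed

lemma offset_11_eq_sum:
  "offset_11 m w = (\<Sum>j\<le>m. (of_bool (precedes_11 w j) + 2 * of_bool (precedes_11 w (Suc j))) * (m choose j))"
  unfolding offset_11_def card_bool_lists_not_prefix_11
    card_bool_lists_weight_pred[of m "precedes_11 w"]
    card_bool_lists_weight_pred[of m "\<lambda>j. precedes_11 w (Suc j)"]
    sum_distrib_left sum.distrib[symmetric]
  by (rule sum.cong) (simp_all add: algebra_simps)

lemma precedes_11_adjacent_count:
  "of_bool (precedes_11 w j) + 2 * of_bool (precedes_11 w (Suc j))
     + of_bool (precedes_11 (Suc w) j) + 2 * of_bool (precedes_11 (Suc w) (Suc j))
   = (3 + (if j \<le> w then (- 1) ^ j else 0) + (if j = Suc w then (- 1) ^ w else 0) :: int)"
  by (cases "even w"; cases "even j") (auto simp: precedes_11_def, presburger+)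

lemma offset_11_adjacent_sum:
  assumes "w \<le> m"
  shows "int (offset_11 (Suc m) w + offset_11 (Suc m) (Suc w))
    = 3 * 2 ^ Suc m + (- 1) ^ w * (int (m choose w) + int (Suc m choose Suc w))"
proof -
  let ?c = "\<lambda>j. int (Suc m choose j)"
  have "int (offset_11 (Suc m) w + offset_11 (Suc m) (Suc w))
      = (\<Sum>j\<le>Suc m. (of_bool (precedes_11 w j) + 2 * of_bool (precedes_11 w (Suc j))
          + of_bool (precedes_11 (Suc w) j) + 2 * of_bool (precedes_11 (Suc w) (Suc j))) * ?c j)"
    unfolding offset_11_eq_sum of_nat_add of_nat_sum sum.distrib[symmetric]
    by (rule sum.cong) (simp_all add: algebra_simps)
  also have "\<dots> = (\<Sum>j\<le>Suc m. (3 + (if j \<le> w then (- 1) ^ j else 0) + (if j = Suc w then (- 1) ^ w else 0)) * ?c j)"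
    by (simp only: precedes_11_adjacent_count)
  also have "\<dots> = (\<Sum>j\<le>Suc m. 3 * ?c j) + (\<Sum>j\<le>Suc m. if j \<le> w then (- 1) ^ j * ?c j else 0)
      + (\<Sum>j\<le>Suc m. if j = Suc w then (- 1) ^ w * ?c j else 0)"
    unfolding sum.distrib[symmetric] by (rule sum.cong) (simp_all add: algebra_simps)
  also have "(\<Sum>j\<le>Suc m. 3 * ?c j) = 3 * 2 ^ Suc m"
    using choose_row_sum[of "Suc m"] by (simp flip: sum_distrib_left of_nat_sum)
  also have "(\<Sum>j\<le>Suc m. if j \<le> w then (- 1) ^ j * ?c j else 0) = (\<Sum>j\<le>w. (- 1) ^ j * ?c j)"
  proof -
    have "(\<Sum>j\<le>Suc m. if j \<le> w then (- 1) ^ j * ?c j else 0) = (\<Sum>j\<in>{..Suc m} \<inter> {..w}. (- 1) ^ j * ?c j)"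
      by (simp only: sum.inter_restrict[OF finite_atMost] atMost_iff)
    also have "{..Suc m} \<inter> {..w} = {..w}"
      using assms by auto
    finally show ?thesis .
  qed
  also have "\<dots> = (- 1) ^ w * int (m choose w)"
    by (rule alternating_sum_choose_Suc)
  also have "(\<Sum>j\<le>Suc m. if j = Suc w then (- 1) ^ w * ?c j else 0) = (- 1) ^ w * ?c (Suc w)"
    using assms by (simp add: sum.delta)
  finally show ?thesis
    by (simp add: algebra_simps)
qed

lemma offset_11_adjacent_sum_le:
  assumes "Suc w \<le> m"
  shows "offset_11 m w + offset_11 m (Suc w)
    \<le> 3 * 2 ^ m + ((m - 1) choose (m div 2)) + (m choose ((m + 1) div 2))"
proof -
  obtain k where m: "m = Suc k"
    using assms by (cases m) auto
  have "int (offset_11 m w + offset_11 m (Suc w))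
      = 3 * 2 ^ m + (- 1) ^ w * (int (k choose w) + int (m choose Suc w))"
    using offset_11_adjacent_sum[of w k] assms m by simp
  also have "\<dots> \<le> int (3 * 2 ^ m + ((m - 1) choose (m div 2)) + (m choose ((m + 1) div 2)))"
    using binomial_le_ceiling_half[of k w] binomial_le_ceiling_half[of m "Suc w"] m
    by (cases "even w") simp_all
  finally show ?thesis
    by (simp only: of_nat_le_iff)
qed

theorem theorem2p6:
  fixes n :: nat and x y :: "bool list"
  assumes "n \<ge> 5" and "even n"
    and "x \<in> hcube_V n" and "y \<in> hcube_V n" and "hcube_adj n x y"
    and "f_lab n x + f_lab n y = str_Q n"
    and "take 2 x = [True, True]" and "take 2 y = [True, True]"
  shows "str_Q n \<le> str_Q (n - 2) + 3 * 2 ^ (n - 2)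
           + ((n - 3) choose (nat \<lceil>real (n - 3) / 2\<rceil>))
           + ((n - 2) choose (nat \<lceil>real (n - 2) / 2\<rceil>))"
proof -
  define m where "m = n - 2"
  have n: "n = Suc (Suc m)" "even m"
    using assms(1,2) by (auto simp: m_def)
  have "n - 3 + 1 = m"
    using assms(1) by (simp add: m_def)
  then have ceilings: "nat \<lceil>real (n - 3) / 2\<rceil> = m div 2" "nat \<lceil>real (n - 2) / 2\<rceil> = (m + 1) div 2"
    by (simp_all only: nat_ceiling_half m_def)
  obtain x' y' where x: "x = True # True # x'" "length x' = m" and y: "y = True # True # y'" "length y' = m"
    using assms(3,4,7,8) n by (auto simp: hcube_V_def length_Suc_conv numeral_2_eq_2)
  have adj: "hcube_adj m x' y'"
    using assms(5) x y n by (simp add: hcube_adj_Cons_Cons)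
  then obtain w where w: "{weight x', weight y'} = {w, Suc w}" "Suc w \<le> m"
    using hcube_adj_weight[OF adj] weight_le_length[of x'] weight_le_length[of y'] x y
    by (auto simp: insert_commute)
  have "str_Q n = f_lab m x' + f_lab m y' + (offset_11 m w + offset_11 m (Suc w))"
    using assms(6) f_lab_11[OF n(2) x(2)] f_lab_11[OF n(2) y(2)] x y n w(1)
    by (auto simp: doubleton_eq_iff)
  also have "\<dots> \<le> str_Q m + (3 * 2 ^ m + ((m - 1) choose (m div 2)) + (m choose ((m + 1) div 2)))"
  proof (rule add_mono)
    show "f_lab m x' + f_lab m y' \<le> str_Q m"
      using x y adj by (intro strength_ge finite_hcube_V) (auto simp: hcube_V_def)
  qed (rule offset_11_adjacent_sum_le[OF w(2)])
  finally show ?thesis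
    unfolding ceilings by (simp add: m_def)
qed

end
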